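(* Let $h_1,h_2$ be half-spaces of a finite dimensional CAT(0) cube complex with $h_1\subsetneq h_2^*$. Then $\beta(h_1,h_2)$ is consistent (i.e. $\beta\cap\beta^*=\varnothing$, and $h\in\beta$, $h\subset k$ imply $k\in\beta$) and satisfies the descending chain condition (every descending chain in $\beta(h_1,h_2)$ is eventually constant).
   Context: $X$ is a finite-dimensional CAT(0) cube complex identified with its vertex set, $\mathfrak H$ its set of half-spaces, $h^*=X\setminus h$, $\mathfrak s^*=\{h^*:h\in\mathfrak s\}$. Half-spaces $h,k$ are transverse ($h\pitchfork k$) if $h\cap k,h\cap k^*,h^*\cap k,h^*\cap k^*$ are all nonempty. Write $\hat a\subset b$ if $a\subsetneq b$ or $a^*\subsetneq b$. For $h_1\subsetneq h_2^*$, $\beta(h_1,h_2)$ is the set of $h\in\mathfrak H$ satisfying one of: (1) $\hat h_1\subset h$ and $h\pitchfork h_2$; (2) $\hat h_2\subset h$ and $h\pitchfork h_1$; (3) $\hat h_1\subset h$ and $\hat h_2\subset h$. *)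

theory Defs
  imports Main
begin

text \<open>A CAT(0) cube complex is identified with its vertex set V; its 1-skeleton is a
median graph (Chepoi/Roller), given by a simple graph relation E on V.\<close>

inductive walk :: "'a set \<Rightarrow> ('a \<Rightarrow> 'a \<Rightarrow> bool) \<Rightarrow> nat \<Rightarrow> 'a \<Rightarrow> 'a \<Rightarrow> bool"
  for V E where
  walk_refl: "x \<in> V \<Longrightarrow> walk V E 0 x x"
| walk_step: "x \<in> V \<Longrightarrow> E x y \<Longrightarrow> walk V E n y z \<Longrightarrow> walk V E (Suc n) x z"

definition gdist :: "'a set \<Rightarrow> ('a \<Rightarrow> 'a \<Rightarrow> bool) \<Rightarrow> 'a \<Rightarrow> 'a \<Rightarrow> nat" where
  "gdist V E x y = (LEAST n. walk V E n x y)"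

definition interval :: "'a set \<Rightarrow> ('a \<Rightarrow> 'a \<Rightarrow> bool) \<Rightarrow> 'a \<Rightarrow> 'a \<Rightarrow> 'a set" where
  "interval V E x y = {z \<in> V. gdist V E x z + gdist V E z y = gdist V E x y}"

definition median_graph :: "'a set \<Rightarrow> ('a \<Rightarrow> 'a \<Rightarrow> bool) \<Rightarrow> bool" where
  "median_graph V E \<longleftrightarrow>
     (\<forall>x y. E x y \<longrightarrow> x \<in> V \<and> y \<in> V) \<and>
     (\<forall>x. \<not> E x x) \<and> (\<forall>x y. E x y \<longrightarrow> E y x) \<and>
     (\<forall>x\<in>V. \<forall>y\<in>V. \<exists>n. walk V E n x y) \<and>
     (\<forall>x\<in>V. \<forall>y\<in>V. \<forall>z\<in>V. \<exists>!m. m \<in> interval V E x y \<inter> interval V E y z \<inter> interval V E x z)"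

definition gconvex :: "'a set \<Rightarrow> ('a \<Rightarrow> 'a \<Rightarrow> bool) \<Rightarrow> 'a set \<Rightarrow> bool" where
  "gconvex V E S \<longleftrightarrow> S \<subseteq> V \<and> (\<forall>x\<in>S. \<forall>y\<in>S. interval V E x y \<subseteq> S)"

definition halfspaces :: "'a set \<Rightarrow> ('a \<Rightarrow> 'a \<Rightarrow> bool) \<Rightarrow> 'a set set" where
  "halfspaces V E = {h. h \<noteq> {} \<and> h \<noteq> V \<and> gconvex V E h \<and> gconvex V E (V - h)}"

definition transverse :: "'a set \<Rightarrow> 'a set \<Rightarrow> 'a set \<Rightarrow> bool" where
  "transverse V h k \<longleftrightarrow> h \<inter> k \<noteq> {} \<and> h \<inter> (V - k) \<noteq> {} \<and> (V - h) \<inter> k \<noteq> {}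
      \<and> (V - h) \<inter> (V - k) \<noteq> {}"

definition finite_dim :: "'a set \<Rightarrow> ('a \<Rightarrow> 'a \<Rightarrow> bool) \<Rightarrow> bool" where
  "finite_dim V E \<longleftrightarrow> (\<exists>N::nat. \<forall>F. F \<subseteq> halfspaces V E \<and> finite F \<and>
      (\<forall>h\<in>F. \<forall>k\<in>F. h \<noteq> k \<longrightarrow> transverse V h k) \<longrightarrow> card F \<le> N)"

definition cat0_cube_complex :: "'a set \<Rightarrow> ('a \<Rightarrow> 'a \<Rightarrow> bool) \<Rightarrow> bool" where
  "cat0_cube_complex V E \<longleftrightarrow> median_graph V E \<and> finite_dim V E"

definition hatsub :: "'a set \<Rightarrow> 'a set \<Rightarrow> 'a set \<Rightarrow> bool" where
  "hatsub V a b \<longleftrightarrow> a \<subset> b \<or> (V - a) \<subset> b"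

definition beta :: "'a set \<Rightarrow> ('a \<Rightarrow> 'a \<Rightarrow> bool) \<Rightarrow> 'a set \<Rightarrow> 'a set \<Rightarrow> 'a set set" where
  "beta V E h1 h2 = {h \<in> halfspaces V E.
      (hatsub V h1 h \<and> transverse V h h2) \<or>
      (hatsub V h2 h \<and> transverse V h h1) \<or>
      (hatsub V h1 h \<and> hatsub V h2 h)}"

definition consistent :: "'a set \<Rightarrow> ('a \<Rightarrow> 'a \<Rightarrow> bool) \<Rightarrow> 'a set set \<Rightarrow> bool" where
  "consistent V E \<beta> \<longleftrightarrow> \<beta> \<inter> ((\<lambda>h. V - h) ` \<beta>) = {} \<and>
     (\<forall>h\<in>\<beta>. \<forall>k\<in>halfspaces V E. h \<subseteq> k \<longrightarrow> k \<in> \<beta>)"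

definition dcc :: "'a set set \<Rightarrow> bool" where
  "dcc \<beta> \<longleftrightarrow> (\<forall>f::nat \<Rightarrow> 'a set. (\<forall>n. f n \<in> \<beta>) \<and> (\<forall>n. f (Suc n) \<subseteq> f n) \<longrightarrow>
      (\<exists>N. \<forall>n\<ge>N. f n = f N))"

end

theory Submission
  imports Defs "HOL-Library.Infinite_Set"
begin

text \<open>Consistency of \<open>\<beta>(h\<^sub>1, h\<^sub>2)\<close> is a set-theoretic check: complementation does not
change transversality, no half-space \<open>h\<close> has both \<open>\<hat>a \<subset> h\<close> and \<open>\<hat>a \<subset> h\<^sup>*\<close>, and when \<open>h\<close>
grows, \<open>\<hat>a \<subset> h\<close> persists while \<open>h \<pitchfork> a\<close> either persists or turns into \<open>\<hat>a \<subset> h\<close>.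

For the descending chain condition, every element of \<open>\<beta>\<close> contains one of \<open>h\<^sub>1, h\<^sub>1\<^sup>*, h\<^sub>2, h\<^sub>2\<^sup>*\<close>,
hence one of four fixed vertices. All elements of \<open>\<beta>\<close> below some \<open>k \<in> \<beta>\<close> miss a vertex
\<open>y \<notin> k\<close>, so they separate one of the four vertices from \<open>y\<close>. In a median graph only
finitely many half-spaces separate two vertices: by the median property at most one
half-space separates the endpoints of an edge, and a path is a finite sequence of edges.
So \<open>\<beta>\<close> has finite lower sets, which forces descending chains to stabilise.\<close>

lemma halfspacesD:
  assumes "h \<in> halfspaces V E"
  shows "h \<subseteq> V" and "h \<noteq> {}" and "V - h \<noteq> {}"
  using assms unfolding halfspaces_def gconvex_def by blast+

lemma transverse_complement_iff:
  assumes "h \<subseteq> V" "a \<subseteq> V"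
  shows "transverse V (V - h) a \<longleftrightarrow> transverse V h a"
  using assms unfolding transverse_def by (auto simp: Int_commute Diff_Diff_Int Int_absorb1)

lemma hatsub_not_transverse:
  assumes "hatsub V a h" "a \<subseteq> V" "h \<subseteq> V"
  shows "\<not> transverse V h a"
  using assms unfolding hatsub_def transverse_def by blast

lemma hatsub_not_both_complements:
  assumes "hatsub V a h" "hatsub V a (V - h)" "a \<noteq> {}" "a \<subseteq> V" "V - a \<noteq> {}"
  shows False
  using assms unfolding hatsub_def by blast

lemma hatsub_mono:
  assumes "hatsub V a h" "h \<subseteq> k" "k \<subseteq> V"
  shows "hatsub V a k"
  using assms unfolding hatsub_def by blast

lemma transverse_mono_or_hatsub:
  assumes "transverse V h a" "h \<subset> k" "k \<subseteq> V" "a \<subseteq> V" "V - k \<noteq> {}"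
  shows "transverse V k a \<or> hatsub V a k"
  using assms unfolding transverse_def hatsub_def by blast

lemma beta_complement_not_in_beta:
  assumes h1: "h1 \<in> halfspaces V E" and h2: "h2 \<in> halfspaces V E"
    and h: "h \<in> beta V E h1 h2"
  shows "V - h \<notin> beta V E h1 h2"
proof
  assume h': "V - h \<in> beta V E h1 h2"
  have hV: "h \<subseteq> V" using h halfspacesD unfolding beta_def by blast
  note s1 = halfspacesD[OF h1] and s2 = halfspacesD[OF h2]
  have "transverse V (V - h) h1 \<longleftrightarrow> transverse V h h1"
    and "transverse V (V - h) h2 \<longleftrightarrow> transverse V h h2"
    using transverse_complement_iff hV s1(1) s2(1) by blast+
  with h h' show False unfolding beta_def
    using hatsub_not_both_complements[of V h1 h] hatsub_not_both_complements[of V h2 h]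
      hatsub_not_transverse[of V h1 h] hatsub_not_transverse[of V h2 h]
      hatsub_not_transverse[of V h1 "V - h"] hatsub_not_transverse[of V h2 "V - h"] s1 s2 hV
    by blast
qed

lemma beta_upward_closed:
  assumes h1: "h1 \<in> halfspaces V E" and h2: "h2 \<in> halfspaces V E"
    and h: "h \<in> beta V E h1 h2" and k: "k \<in> halfspaces V E" and "h \<subseteq> k"
  shows "k \<in> beta V E h1 h2"
proof (cases "h = k")
  case True
  with h show ?thesis by simp
next
  case False
  with \<open>h \<subseteq> k\<close> have "h \<subset> k" by blast
  note sk = halfspacesD[OF k] and s1 = halfspacesD[OF h1] and s2 = halfspacesD[OF h2]
  show ?thesis using h k unfolding beta_def
    using hatsub_mono[of V h1 h k] hatsub_mono[of V h2 h k]
      transverse_mono_or_hatsub[of V h h1 k] transverse_mono_or_hatsub[of V h h2 k]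
      \<open>h \<subset> k\<close> sk s1 s2 by blast
qed

lemma consistent_beta:
  assumes "h1 \<in> halfspaces V E" "h2 \<in> halfspaces V E"
  shows "consistent V E (beta V E h1 h2)"
  unfolding consistent_def
  using beta_complement_not_in_beta[OF assms] beta_upward_closed[OF assms] by blast

lemma antimono_finite_range_eventually_const:
  fixes f :: "nat \<Rightarrow> 'b::order"
  assumes dec: "\<And>n. f (Suc n) \<le> f n" and fin: "finite (range f)"
  shows "\<exists>N. \<forall>n\<ge>N. f n = f N"
proof -
  have anti: "\<And>m n. m \<le> n \<Longrightarrow> f n \<le> f m"
    using lift_Suc_antimono_le[of f] dec by blast
  obtain A where A: "infinite {n. f n = A}"
    using inf_img_fin_dom[OF fin] unfolding vimage_def by auto
  then obtain N where N: "f N = A"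
    using not_finite_existsD by blast
  have "f n = f N" if "N \<le> n" for n
  proof -
    obtain m where "n \<le> m" "f m = A"
      using A unfolding infinite_nat_iff_unbounded_le by blast
    then show ?thesis using anti[OF \<open>N \<le> n\<close>] anti[OF \<open>n \<le> m\<close>] N by auto
  qed
  then show ?thesis by blast
qed

lemma dcc_if_finite_lower_sets:
  assumes "\<And>k. k \<in> \<beta> \<Longrightarrow> finite {h \<in> \<beta>. h \<subseteq> k}"
  shows "dcc \<beta>"
  unfolding dcc_def
proof (intro allI impI)
  fix f :: "nat \<Rightarrow> 'a set"
  assume "(\<forall>n. f n \<in> \<beta>) \<and> (\<forall>n. f (Suc n) \<subseteq> f n)"
  then have f\<beta>: "\<And>n. f n \<in> \<beta>" and dec: "\<And>n. f (Suc n) \<subseteq> f n" by auto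
  have "range f \<subseteq> {h \<in> \<beta>. h \<subseteq> f 0}"
    using f\<beta> lift_Suc_antimono_le[of f] dec by blast
  then have "finite (range f)"
    using assms[OF f\<beta>] finite_subset by blast
  then show "\<exists>N. \<forall>n\<ge>N. f n = f N"
    using antimono_finite_range_eventually_const dec by blast
qed

lemma walk_0_eq: "walk V E 0 x y \<Longrightarrow> x = y"
  by (erule walk.cases) auto

lemma gdist_walk:
  assumes "median_graph V E" "x \<in> V" "y \<in> V"
  shows "walk V E (gdist V E x y) x y"
proof -
  obtain n where "walk V E n x y" using assms unfolding median_graph_def by blast
  then show ?thesis unfolding gdist_def by (rule LeastI)
qed

lemma gdist_eq_0D:
  assumes "median_graph V E" "x \<in> V" "y \<in> V" "gdist V E x y = 0"
  shows "x = y"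
  using gdist_walk[OF assms(1-3)] assms(4) walk_0_eq by metis

lemma interval_edge:
  assumes mg: "median_graph V E" and uv: "E u v" and m: "m \<in> interval V E u v"
  shows "m = u \<or> m = v"
proof -
  have "u \<in> V" "v \<in> V" using mg uv unfolding median_graph_def by auto
  have "m \<in> V" using m unfolding interval_def by auto
  have "walk V E 1 u v" using \<open>u \<in> V\<close> \<open>v \<in> V\<close> uv by (auto intro: walk.intros)
  then have "gdist V E u v \<le> 1" unfolding gdist_def by (rule Least_le)
  then have "gdist V E u m = 0 \<or> gdist V E m v = 0" using m unfolding interval_def by auto
  then show ?thesis using gdist_eq_0D[OF mg] \<open>u \<in> V\<close> \<open>v \<in> V\<close> \<open>m \<in> V\<close> by blast
qed

lemma halfspace_separating_edge_subset:
  assumes mg: "median_graph V E" and uv: "E u v"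
    and h: "h \<in> halfspaces V E" and h': "h' \<in> halfspaces V E"
    and "u \<in> h" "u \<in> h'" "v \<notin> h" "v \<notin> h'"
  shows "h \<subseteq> h'"
proof
  fix z assume z: "z \<in> h"
  show "z \<in> h'"
  proof (rule ccontr)
    assume "z \<notin> h'"
    have "u \<in> V" "v \<in> V" using mg uv unfolding median_graph_def by auto
    have "z \<in> V" using z halfspacesD[OF h] by auto
    obtain m where m: "m \<in> interval V E z u \<inter> interval V E u v \<inter> interval V E z v"
      using mg \<open>z \<in> V\<close> \<open>u \<in> V\<close> \<open>v \<in> V\<close> unfolding median_graph_def by blast
    \<comment> \<open>The median lies in \<open>h\<close> by convexity of \<open>h\<close>, outside \<open>h'\<close> by convexity of
      \<open>h'\<^sup>*\<close>, and is an endpoint of the edge; neither endpoint has this property.\<close>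
    have "m \<in> h" using m z \<open>u \<in> h\<close> h unfolding halfspaces_def gconvex_def by blast
    moreover have "m \<notin> h'"
      using m \<open>z \<in> V\<close> \<open>z \<notin> h'\<close> \<open>v \<in> V\<close> \<open>v \<notin> h'\<close> h' unfolding halfspaces_def gconvex_def
      by blast
    moreover have "m = u \<or> m = v" using interval_edge[OF mg uv] m by blast
    ultimately show False using assms by blast
  qed
qed

lemma finite_halfspaces_separating_edge:
  assumes mg: "median_graph V E" and uv: "E u v"
  shows "finite {h \<in> halfspaces V E. u \<in> h \<and> v \<notin> h}"
proof (cases "{h \<in> halfspaces V E. u \<in> h \<and> v \<notin> h} = {}")
  case False
  then obtain h0 where "h0 \<in> halfspaces V E" "u \<in> h0" "v \<notin> h0" by blast
  then have "{h \<in> halfspaces V E. u \<in> h \<and> v \<notin> h} \<subseteq> {h0}"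
    using halfspace_separating_edge_subset[OF mg uv] by blast
  then show ?thesis using finite_subset by blast
qed (metis finite.emptyI)

lemma finite_separating_halfspaces_walk:
  assumes mg: "median_graph V E" and "walk V E n x y"
  shows "finite {h \<in> halfspaces V E. x \<in> h \<and> y \<notin> h}"
  using \<open>walk V E n x y\<close>
proof (induction rule: walk.induct)
  case (walk_refl x)
  then show ?case by simp
next
  case (walk_step x w n z)
  have "{h \<in> halfspaces V E. x \<in> h \<and> z \<notin> h} \<subseteq>
      {h \<in> halfspaces V E. x \<in> h \<and> w \<notin> h} \<union> {h \<in> halfspaces V E. w \<in> h \<and> z \<notin> h}"
    by blast
  with finite_halfspaces_separating_edge[OF mg \<open>E x w\<close>] walk_step.IH show ?case
    by (meson finite_Un finite_subset)
qed

lemma finite_separating_halfspaces: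
  assumes "median_graph V E" "x \<in> V" "y \<in> V"
  shows "finite {h \<in> halfspaces V E. x \<in> h \<and> y \<notin> h}"
proof -
  obtain n where "walk V E n x y" using assms unfolding median_graph_def by blast
  then show ?thesis using finite_separating_halfspaces_walk[OF assms(1)] by blast
qed

lemma finite_beta_below:
  assumes mg: "median_graph V E"
    and h1: "h1 \<in> halfspaces V E" and h2: "h2 \<in> halfspaces V E"
    and k: "k \<in> beta V E h1 h2"
  shows "finite {h \<in> beta V E h1 h2. h \<subseteq> k}"
proof -
  have "k \<in> halfspaces V E" using k unfolding beta_def by blast
  then obtain y where y: "y \<in> V" "y \<notin> k" using halfspacesD(3) by blast
  note s1 = halfspacesD[OF h1] and s2 = halfspacesD[OF h2]
  obtain x1 x2 x3 x4 where x: "x1 \<in> h1" "x2 \<in> V - h1" "x3 \<in> h2" "x4 \<in> V - h2"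
    using s1(2,3) s2(2,3) by (meson ex_in_conv)
  let ?S = "\<lambda>x. {h \<in> halfspaces V E. x \<in> h \<and> y \<notin> h}"
  have "{h \<in> beta V E h1 h2. h \<subseteq> k} \<subseteq> ?S x1 \<union> ?S x2 \<union> ?S x3 \<union> ?S x4"
  proof
    fix h assume h: "h \<in> {h \<in> beta V E h1 h2. h \<subseteq> k}"
    then have "hatsub V h1 h \<or> hatsub V h2 h" and "h \<in> halfspaces V E" and "y \<notin> h"
      using y unfolding beta_def by blast+
    moreover have "x1 \<in> h \<or> x2 \<in> h \<or> x3 \<in> h \<or> x4 \<in> h" if "hatsub V h1 h \<or> hatsub V h2 h"
      using that x unfolding hatsub_def by blast
    ultimately show "h \<in> ?S x1 \<union> ?S x2 \<union> ?S x3 \<union> ?S x4"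
      by blast
  qed
  moreover have "finite (?S x1 \<union> ?S x2 \<union> ?S x3 \<union> ?S x4)"
    using x s1(1) s2(1) finite_separating_halfspaces[OF mg _ y(1)] by auto
  ultimately show ?thesis
    by (rule finite_subset)
qed

theorem lemma3:
  fixes V :: "'a set" and E :: "'a \<Rightarrow> 'a \<Rightarrow> bool" and h1 h2 :: "'a set"
  assumes "cat0_cube_complex V E"
    and "h1 \<in> halfspaces V E" and "h2 \<in> halfspaces V E"
    and "h1 \<subset> V - h2"
  shows "consistent V E (beta V E h1 h2) \<and> dcc (beta V E h1 h2)"
proof
  show "consistent V E (beta V E h1 h2)"
    using consistent_beta[OF assms(2,3)] .
  have "median_graph V E"
    using assms(1) unfolding cat0_cube_complex_def by blast
  then show "dcc (beta V E h1 h2)"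
    using dcc_if_finite_lower_sets finite_beta_below[OF _ assms(2,3)] by blast
qed

end
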